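(* There is no axis rule $f$ (defined for profiles over every finite candidate set) that is a scoring rule, neutral, consistent with linearity, resistant to cloning, and satisfies clone-proximity.
   Context: Candidates come from a fixed infinite universe; rules are defined for profiles over every finite candidate set $C$. An approval ballot is a nonempty subset $A\subseteq C$; a profile over $C$ is a finite sequence of ballots. An axis is a strict linear order $\triangleleft$ on $C$, $\overleftarrow{\triangleleft}$ its reverse; a ballot $A$ is an interval of $\triangleleft$ if for all $a,b\in A$ and every $c$ with $a\triangleleft c\triangleleft b$ we have $c\in A$. A profile is linear if some axis makes all its ballots intervals; $\mathrm{con}(P)$ is the set of such axes. An axis rule maps each profile $P$ over $C$ to a nonempty set $f(P)$ of axes on $C$ closed under reversal. $f$ is a scoring rule if for every finite $C$ there is a cost function $\mathrm{cost}_C:(2^C\setminus\{\emptyset\})\times\{\text{axes on }C\}\to\mathbb R_{\ge0}$ with $f(P)=\arg\min_{\triangleleft}\sum_{A\in P}\mathrm{cost}_C(A,\triangleleft)$ for every profile $P$ over $C$. $f$ is neutral if for every bijection $\pi:C\to C'$, $f(\pi(P))=\pi(f(P))$ (renaming candidates in ballots and axes). $f$ is consistent with linearity if $f(P)=\mathrm{con}(P)$ for every linear profile. Two candidates $a,a'$ are clones in $P$ if for every $A\in P$, $a\in A$ iff $a'\in A$. $f$ satisfies clone-proximity if for every profile $P$ with clones $a,a'$, every $\triangleleft\in f(P)$, every $x$ with $a\triangleleft x\triangleleft a'$ or $a'\triangleleft x\triangleleft a$, and every $A\in P$ with $a,a'\in A$, we have $x\in A$. For $c\in C$, $P_{-c}$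 is the profile over $C\setminus\{c\}$ obtained by removing $c$ from every ballot (ballots becoming empty are discarded), and $\triangleleft_{-c}$ is the restriction of $\triangleleft$ to $C\setminus\{c\}$. $f$ is resistant to cloning if for every profile $P$ with clones $a,a'$: (1) for every $\triangleleft\in f(P)$, $\triangleleft_{-a}\in f(P_{-a})$; and (2) for every $\triangleleft^*\in f(P_{-a})$ there is $\triangleleft\in f(P)$ with $\triangleleft_{-a}=\triangleleft^*$. *)

theory Defs
  imports Complex_Main
begin

definition is_axis :: "'a set \<Rightarrow> 'a rel \<Rightarrow> bool" where
  "is_axis C r \<longleftrightarrow> strict_linear_order_on C r \<and> r \<subseteq> C \<times> C"

definition axes :: "'a set \<Rightarrow> 'a rel set" where
  "axes C = {r. is_axis C r}"

definition is_interval :: "'a rel \<Rightarrow> 'a set \<Rightarrow> bool" where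
  "is_interval r A \<longleftrightarrow> (\<forall>a\<in>A. \<forall>b\<in>A. \<forall>c. (a, c) \<in> r \<and> (c, b) \<in> r \<longrightarrow> c \<in> A)"

definition is_profile :: "'a set \<Rightarrow> 'a set list \<Rightarrow> bool" where
  "is_profile C P \<longleftrightarrow> (\<forall>A\<in>set P. A \<noteq> {} \<and> A \<subseteq> C)"

definition con :: "'a set \<Rightarrow> 'a set list \<Rightarrow> 'a rel set" where
  "con C P = {r \<in> axes C. \<forall>A\<in>set P. is_interval r A}"

definition is_linear :: "'a set \<Rightarrow> 'a set list \<Rightarrow> bool" where
  "is_linear C P \<longleftrightarrow> con C P \<noteq> {}"

definition axis_rule :: "('a set \<Rightarrow> 'a set list \<Rightarrow> 'a rel set) \<Rightarrow> bool" where
  "axis_rule f \<longleftrightarrow> (\<forall>C P. finite C \<and> is_profile C P \<longrightarrow>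
      f C P \<noteq> {} \<and> f C P \<subseteq> axes C \<and> (\<forall>r\<in>f C P. r\<inverse> \<in> f C P))"

definition scoring_rule :: "('a set \<Rightarrow> 'a set list \<Rightarrow> 'a rel set) \<Rightarrow> bool" where
  "scoring_rule f \<longleftrightarrow> (\<exists>cost :: 'a set \<Rightarrow> 'a set \<Rightarrow> 'a rel \<Rightarrow> real.
      (\<forall>C. finite C \<longrightarrow> (\<forall>A r. A \<noteq> {} \<and> A \<subseteq> C \<and> r \<in> axes C \<longrightarrow> cost C A r \<ge> 0)) \<and>
      (\<forall>C P. finite C \<and> is_profile C P \<longrightarrow>
         f C P = {r \<in> axes C. \<forall>r'\<in>axes C.
                    (\<Sum>A\<leftarrow>P. cost C A r) \<le> (\<Sum>A\<leftarrow>P. cost C A r')}))"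

definition rename_axis :: "('a \<Rightarrow> 'a) \<Rightarrow> 'a rel \<Rightarrow> 'a rel" where
  "rename_axis \<pi> r = map_prod \<pi> \<pi> ` r"

definition rename_profile :: "('a \<Rightarrow> 'a) \<Rightarrow> 'a set list \<Rightarrow> 'a set list" where
  "rename_profile \<pi> P = map (\<lambda>A. \<pi> ` A) P"

definition neutral :: "('a set \<Rightarrow> 'a set list \<Rightarrow> 'a rel set) \<Rightarrow> bool" where
  "neutral f \<longleftrightarrow> (\<forall>C C' P \<pi>. finite C \<and> is_profile C P \<and> bij_betw \<pi> C C' \<longrightarrow>
      f C' (rename_profile \<pi> P) = rename_axis \<pi> ` f C P)"

definition consistent_with_linearity :: "('a set \<Rightarrow> 'a set list \<Rightarrow> 'a rel set) \<Rightarrow> bool" where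
  "consistent_with_linearity f \<longleftrightarrow> (\<forall>C P. finite C \<and> is_profile C P \<and> is_linear C P \<longrightarrow>
      f C P = con C P)"

definition clones :: "'a set \<Rightarrow> 'a set list \<Rightarrow> 'a \<Rightarrow> 'a \<Rightarrow> bool" where
  "clones C P a a' \<longleftrightarrow> a \<in> C \<and> a' \<in> C \<and> a \<noteq> a' \<and> (\<forall>A\<in>set P. a \<in> A \<longleftrightarrow> a' \<in> A)"

definition clone_proximity :: "('a set \<Rightarrow> 'a set list \<Rightarrow> 'a rel set) \<Rightarrow> bool" where
  "clone_proximity f \<longleftrightarrow> (\<forall>C P a a'. finite C \<and> is_profile C P \<and> clones C P a a' \<longrightarrow>
      (\<forall>r\<in>f C P. \<forall>x. ((a, x) \<in> r \<and> (x, a') \<in> r) \<or> ((a', x) \<in> r \<and> (x, a) \<in> r) \<longrightarrow>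
         (\<forall>A\<in>set P. a \<in> A \<and> a' \<in> A \<longrightarrow> x \<in> A)))"

definition remove_cand :: "'a \<Rightarrow> 'a set list \<Rightarrow> 'a set list" where
  "remove_cand c P = filter (\<lambda>A. A \<noteq> {}) (map (\<lambda>A. A - {c}) P)"

definition restrict_axis :: "'a \<Rightarrow> 'a rel \<Rightarrow> 'a rel" where
  "restrict_axis c r = {(x, y) \<in> r. x \<noteq> c \<and> y \<noteq> c}"

definition resistant_to_cloning :: "('a set \<Rightarrow> 'a set list \<Rightarrow> 'a rel set) \<Rightarrow> bool" where
  "resistant_to_cloning f \<longleftrightarrow> (\<forall>C P a a'. finite C \<and> is_profile C P \<and> clones C P a a' \<longrightarrow>
      (\<forall>r\<in>f C P. restrict_axis a r \<in> f (C - {a}) (remove_cand a P)) \<and>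
      (\<forall>r'\<in>f (C - {a}) (remove_cand a P). \<exists>r\<in>f C P. restrict_axis a r = r'))"

end

theory Submission
  imports Defs "HOL-Combinatorics.Multiset_Permutations"
begin

text \<open>
  Neutrality and closure under reversal allow replacing the cost function by its sum over all
  renamings of the candidates and both orientations of the axis. The symmetrized cost of a ballot on
  an axis then depends only on the pattern in which the ballot occupies the positions of the axis,
  and consistency with linearity forces all contiguous patterns of one size to cost the same,
  strictly less than every non-contiguous one.

  On four candidates, which non-contiguous pattern has the least excess cost (two approved
  candidates with one in between, two at the ends, or three split as one and two) determines
  optimal axes of small profiles. Adding a clone of one candidate, resistance to cloning lifts
  these optimal axes to five candidates, clone proximity restricts where the clone may be placed,
  and comparing the costs of the lifted axes gives contradictory inequalities in every case.
\<close>

section \<open>Axes given by lists\<close>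

fun list_axis :: "'a list \<Rightarrow> 'a rel" where
  "list_axis [] = {}"
| "list_axis (x # xs) = Pair x ` set xs \<union> list_axis xs"

lemma list_axis_subset: "list_axis xs \<subseteq> set xs \<times> set xs"
  by (induction xs) auto

lemma list_axis_append: "list_axis (xs @ ys) = list_axis xs \<union> list_axis ys \<union> set xs \<times> set ys"
  by (induction xs) auto

lemma list_axis_rev: "list_axis (rev xs) = (list_axis xs)\<inverse>"
  by (induction xs) (auto simp: list_axis_append)

lemma list_axis_map: "list_axis (map g xs) = map_prod g g ` list_axis xs"
  by (induction xs) (auto simp: image_image image_Un)

lemma restrict_axis_list_axis: "restrict_axis c (list_axis xs) = list_axis (removeAll c xs)"
  unfolding restrict_axis_def by (induction xs) auto

lemma list_axis_iff_nth: "(x, y) \<in> list_axis xs \<longleftrightarrow> (\<exists>j<length xs. \<exists>i<j. xs ! i = x \<and> xs ! j = y)"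
proof (induction xs)
  case (Cons a xs)
  have "(x, y) \<in> list_axis (a # xs) \<longleftrightarrow> (x = a \<and> y \<in> set xs) \<or> (x, y) \<in> list_axis xs"
    by auto
  also have "\<dots> \<longleftrightarrow> (\<exists>j<length (a # xs). \<exists>i<j. (a # xs) ! i = x \<and> (a # xs) ! j = y)"
    unfolding Cons.IH by (auto simp: Ex_less_Suc2 in_set_conv_nth)
  finally show ?case .
qed simp

lemma list_axis_in_axes:
  assumes "distinct xs"
  shows "list_axis xs \<in> axes (set xs)"
proof -
  have "irrefl (list_axis xs)"
    using assms by (auto simp: irrefl_def list_axis_iff_nth nth_eq_iff_index_eq)
  moreover have "trans (list_axis xs)"
  proof (rule transI)
    fix x y z
    assume "(x, y) \<in> list_axis xs" "(y, z) \<in> list_axis xs"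
    then obtain i j j' k where "i < j" "j < length xs" "j' < k" "k < length xs"
      "xs ! i = x" "xs ! j = y" "xs ! j' = y" "xs ! k = z"
      by (auto simp: list_axis_iff_nth)
    moreover from this have "j = j'"
      using assms nth_eq_iff_index_eq by fastforce
    ultimately show "(x, z) \<in> list_axis xs"
      unfolding list_axis_iff_nth by (metis less_trans)
  qed
  moreover have "total_on (set xs) (list_axis xs)"
    unfolding total_on_def
  proof (intro ballI impI)
    fix x y
    assume "x \<in> set xs" "y \<in> set xs" "x \<noteq> y"
    then obtain i j where "i < length xs" "j < length xs" "xs ! i = x" "xs ! j = y" "i \<noteq> j"
      by (metis in_set_conv_nth)
    then show "(x, y) \<in> list_axis xs \<or> (y, x) \<in> list_axis xs"
      unfolding list_axis_iff_nth by (metis linorder_neqE_nat)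
  qed
  ultimately show ?thesis
    using list_axis_subset[of xs]
    by (simp add: axes_def is_axis_def strict_linear_order_on_def)
qed

lemma list_axis_inject:
  assumes "distinct xs" "distinct ys" "set xs = set ys" "list_axis xs = list_axis ys"
  shows "xs = ys"
  using assms
proof (induction xs arbitrary: ys)
  case Nil
  then show ?case by simp
next
  case (Cons a xs)
  obtain b ys' where ys: "ys = b # ys'"
    using Cons.prems(3) by (cases ys) auto
  have "a = b"
  proof (rule ccontr)
    assume "a \<noteq> b"
    then have "(b, a) \<in> list_axis ys"
      using Cons.prems(3) ys by auto
    moreover have "(b, a) \<notin> list_axis (a # xs)"
      using Cons.prems(1) list_axis_subset[of xs] by auto
    ultimately show False
      using Cons.prems(4) by blast
  qed
  have "xs = ys'"
  proof (rule Cons.IH)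
    show "distinct xs" "distinct ys'"
      using Cons.prems(1,2) ys by simp_all
    show "set xs = set ys'"
      using Cons.prems(1-3) ys \<open>a = b\<close> by (metis Diff_insert_absorb distinct.simps(2) list.simps(15))
    show "list_axis xs = list_axis ys'"
      using arg_cong[OF Cons.prems(4), of "restrict_axis a"] Cons.prems(1,2) ys \<open>a = b\<close>
      by (simp only: restrict_axis_list_axis) simp
  qed
  then show ?case
    using ys \<open>a = b\<close> by simp
qed

lemma restrict_axis_in_axes:
  assumes "r \<in> axes C"
  shows "restrict_axis c r \<in> axes (C - {c})"
proof -
  have "trans r" "irrefl r" "total_on C r" "r \<subseteq> C \<times> C"
    using assms by (auto simp: axes_def is_axis_def strict_linear_order_on_def)
  moreover have "trans (restrict_axis c r)"
    using \<open>trans r\<close> unfolding restrict_axis_def trans_def by blast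
  ultimately show ?thesis
    unfolding axes_def is_axis_def strict_linear_order_on_def
    by (auto simp: restrict_axis_def irrefl_on_def total_on_def)
qed

lemma obtain_list_axis:
  assumes "finite C" "r \<in> axes C"
  obtains xs where "distinct xs" "set xs = C" "r = list_axis xs"
proof -
  have "\<exists>xs. distinct xs \<and> set xs = C \<and> r = list_axis xs"
    using assms
  proof (induction "card C" arbitrary: C r)
    case 0
    then show ?case
      by (auto simp: axes_def is_axis_def)
  next
    case (Suc n)
    have r: "trans r" "irrefl r" "total_on C r" "r \<subseteq> C \<times> C"
      using Suc.prems(2) by (auto simp: axes_def is_axis_def strict_linear_order_on_def)
    have "wf r"
    proof (rule finite_acyclic_wf)
      show "finite r"
        using r(4) Suc.prems(1) by (meson finite_SigmaI finite_subset)
      show "acyclic r"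
        using r(1,2) by (simp add: acyclic_irrefl)
    qed
    moreover obtain c where "c \<in> C"
      using Suc.hyps(2) by fastforce
    ultimately obtain m where m: "m \<in> C" "\<And>y. (y, m) \<in> r \<Longrightarrow> y \<notin> C"
      by (rule wfE_min) blast
    have "\<exists>ys. distinct ys \<and> set ys = C - {m} \<and> restrict_axis m r = list_axis ys"
    proof (rule Suc.hyps(1))
      show "n = card (C - {m})"
        using Suc.hyps(2) Suc.prems(1) m(1) by simp
      show "restrict_axis m r \<in> axes (C - {m})"
        using Suc.prems(2) by (rule restrict_axis_in_axes)
    qed (use Suc.prems(1) in simp)
    then obtain ys where ys: "distinct ys" "set ys = C - {m}" "restrict_axis m r = list_axis ys"
      by blast
    have "r = Pair m ` set ys \<union> restrict_axis m r"
    proof (intro equalityI subsetI)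
      fix p
      assume "p \<in> r"
      then obtain x y where p: "p = (x, y)" "(x, y) \<in> r"
        by (cases p) auto
      then have "y \<in> C" "y \<noteq> m"
        using r(4) m(2) by auto
      then show "p \<in> Pair m ` set ys \<union> restrict_axis m r"
        using p ys(2) by (auto simp: restrict_axis_def)
    next
      fix p
      assume "p \<in> Pair m ` set ys \<union> restrict_axis m r"
      then show "p \<in> r"
        using r(3) m ys(2) by (auto simp: restrict_axis_def total_on_def)
    qed
    then show ?case
      using ys m(1) by (intro exI[of _ "m # ys"]) auto
  qed
  then show thesis
    using that by blast
qed

lemma list_axis_insertion:
  assumes "finite C" "r \<in> axes C" "c \<in> C" "distinct L" "set L = C - {c}"
    and "restrict_axis c r = list_axis L"
  shows "\<exists>i\<le>length L. r = list_axis (take i L @ c # drop i L)"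
proof -
  obtain xs where xs: "distinct xs" "set xs = C" "r = list_axis xs"
    by (rule obtain_list_axis[OF assms(1,2)])
  obtain us vs where us_vs: "xs = us @ c # vs"
    using split_list[of c xs] xs(2) assms(3) by blast
  have "c \<notin> set us" "c \<notin> set vs"
    using xs(1) us_vs by auto
  then have remove: "removeAll c xs = us @ vs"
    using us_vs by simp
  have "us @ vs = L"
  proof (rule list_axis_inject)
    show "distinct (us @ vs)"
      using xs(1) us_vs by simp
    show "set (us @ vs) = set L"
      using xs(2) assms(5) remove by (metis set_removeAll)
    show "list_axis (us @ vs) = list_axis L"
      using xs(3) assms(6) remove by (metis restrict_axis_list_axis)
  qed (use assms(4) in simp)
  then show ?thesis
    using xs(3) us_vs by (intro exI[of _ "length us"]) auto
qed

lemma set_eq_if_distinct_length: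
  assumes "distinct xs" "distinct ys" "length xs = length ys" "set xs \<subseteq> set ys"
  shows "set xs = set ys"
  using assms by (intro card_subset_eq) (simp_all add: distinct_card)

lemma rename_axis_converse: "rename_axis \<pi> (r\<inverse>) = (rename_axis \<pi> r)\<inverse>"
  unfolding rename_axis_def by auto

lemma rename_axis_list_axis: "rename_axis \<pi> (list_axis xs) = list_axis (map \<pi> xs)"
  unfolding rename_axis_def by (simp add: list_axis_map)

lemma rename_axis_comp: "rename_axis \<pi> (rename_axis \<sigma> r) = rename_axis (\<pi> \<circ> \<sigma>) r"
  unfolding rename_axis_def by (auto simp: image_image map_prod.comp[symmetric])

lemma rename_axis_id: "rename_axis id r = r"
  unfolding rename_axis_def by (simp add: id_def)

lemma inj_rename_axis:
  assumes "inj \<pi>"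
  shows "inj (rename_axis \<pi>)"
proof -
  have "inj (map_prod \<pi> \<pi>)"
    using map_prod_inj_on[OF assms assms] by simp
  show ?thesis
    unfolding rename_axis_def by (rule injI) (simp add: inj_image_eq_iff[OF \<open>inj (map_prod \<pi> \<pi>)\<close>])
qed

lemma converse_in_axes:
  assumes "finite C" "r \<in> axes C"
  shows "r\<inverse> \<in> axes C"
proof -
  obtain xs where "distinct xs" "set xs = C" "r = list_axis xs"
    using obtain_list_axis[OF assms] .
  then show ?thesis
    using list_axis_in_axes[of "rev xs"] by (simp add: list_axis_rev)
qed

lemma rename_axis_in_axes:
  assumes "finite C" "\<pi> permutes C" "r \<in> axes C"
  shows "rename_axis \<pi> r \<in> axes C"
proof -
  obtain xs where "distinct xs" "set xs = C" "r = list_axis xs"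
    using obtain_list_axis[OF assms(1,3)] .
  moreover have "distinct (map \<pi> xs)"
    using \<open>distinct xs\<close> permutes_inj[OF assms(2)] by (simp add: distinct_map inj_on_subset[OF _ subset_UNIV])
  ultimately show ?thesis
    using list_axis_in_axes[of "map \<pi> xs"] permutes_image[OF assms(2)]
    by (simp add: rename_axis_list_axis)
qed

lemma bij_rename_axis:
  assumes "finite C" "\<pi> permutes C"
  shows "bij_betw (rename_axis \<pi>) (axes C) (axes C)"
proof (rule bij_betw_byWitness[where f' = "rename_axis (inv \<pi>)"])
  show "\<forall>r\<in>axes C. rename_axis (inv \<pi>) (rename_axis \<pi> r) = r"
    "\<forall>r\<in>axes C. rename_axis \<pi> (rename_axis (inv \<pi>) r) = r"
    using permutes_inv_o[OF assms(2)] by (simp_all add: rename_axis_comp rename_axis_id)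
  show "rename_axis \<pi> ` axes C \<subseteq> axes C" "rename_axis (inv \<pi>) ` axes C \<subseteq> axes C"
    using rename_axis_in_axes[OF assms(1)] assms(2) permutes_inv[OF assms(2)] by blast+
qed

lemma bij_converse_axes:
  assumes "finite C"
  shows "bij_betw converse (axes C) (axes C)"
  by (rule bij_betw_byWitness[where f' = converse]) (use converse_in_axes[OF assms] in auto)

section \<open>Optimal axes and the symmetrized cost\<close>

definition optimal_axes :: "'a set \<Rightarrow> ('a rel \<Rightarrow> real) \<Rightarrow> 'a rel set" where
  "optimal_axes C score = {r \<in> axes C. \<forall>r'\<in>axes C. score r \<le> score r'}"

lemma optimal_axesI: "r \<in> axes C \<Longrightarrow> (\<And>r'. r' \<in> axes C \<Longrightarrow> g r \<le> g r') \<Longrightarrow> r \<in> optimal_axes C g"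
  by (simp add: optimal_axes_def)

lemma optimal_axes_le: "r \<in> optimal_axes C g \<Longrightarrow> r' \<in> axes C \<Longrightarrow> g r \<le> g r'"
  by (simp add: optimal_axes_def)

lemma optimal_axes_less:
  "r \<in> optimal_axes C g \<Longrightarrow> r' \<in> axes C \<Longrightarrow> r' \<notin> optimal_axes C g \<Longrightarrow> g r < g r'"
  unfolding optimal_axes_def by force

lemma optimal_axes_comp:
  assumes "bij_betw \<phi> (axes C) (axes C)"
  shows "optimal_axes C (g \<circ> \<phi>) = {r \<in> axes C. \<phi> r \<in> optimal_axes C g}"
  using assms unfolding optimal_axes_def bij_betw_def by (auto, metis imageE)

lemma optimal_axes_add:
  assumes "optimal_axes C g = F" "optimal_axes C h = F" "F \<noteq> {}"
  shows "optimal_axes C (\<lambda>r. g r + h r) = F"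
proof (intro equalityI subsetI)
  fix r
  assume r: "r \<in> optimal_axes C (\<lambda>r. g r + h r)"
  obtain r0 where r0: "r0 \<in> F"
    using assms(3) by blast
  show "r \<in> F"
  proof (rule ccontr)
    assume "r \<notin> F"
    moreover have "r \<in> axes C" "r0 \<in> axes C"
      using r r0 assms(1) by (auto simp: optimal_axes_def)
    ultimately have "g r0 < g r" "h r0 < h r"
      using optimal_axes_less r0 assms(1,2) by blast+
    then show False
      using optimal_axes_le[OF r \<open>r0 \<in> axes C\<close>] by simp
  qed
next
  fix r
  assume "r \<in> F"
  then show "r \<in> optimal_axes C (\<lambda>r. g r + h r)"
    using assms(1,2) by (auto simp: optimal_axes_def intro: add_mono)
qed

lemma optimal_axes_sum:
  assumes "finite I" "I \<noteq> {}" "\<And>i. i \<in> I \<Longrightarrow> optimal_axes C (g i) = F" "F \<noteq> {}"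
  shows "optimal_axes C (\<lambda>r. \<Sum>i\<in>I. g i r) = F"
  using assms(1,2,3)
proof (induction I rule: finite_ne_induct)
  case (insert i I)
  then show ?case
    using optimal_axes_add[of C "g i" F] assms(4) by simp
qed simp

text \<open>
  Summing over all renamings of \<open>C\<close> and both orientations makes the cost invariant under
  renaming and reversal, without changing the optimal axes.
\<close>

definition sym_cost :: "('a set \<Rightarrow> 'a set \<Rightarrow> 'a rel \<Rightarrow> real) \<Rightarrow> 'a set \<Rightarrow> 'a set \<Rightarrow> 'a rel \<Rightarrow> real" where
  "sym_cost cost C A r =
     (\<Sum>\<pi> | \<pi> permutes C. cost C (\<pi> ` A) (rename_axis \<pi> r) + cost C (\<pi> ` A) ((rename_axis \<pi> r)\<inverse>))"

lemma is_profile_rename: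
  assumes "is_profile C P" "\<pi> permutes C"
  shows "is_profile C (rename_profile \<pi> P)"
  using assms permutes_image[OF assms(2)] by (auto simp: is_profile_def rename_profile_def)

lemma sum_list_rename_profile: "(\<Sum>A\<leftarrow>rename_profile \<pi> P. g A) = (\<Sum>A\<leftarrow>P. g (\<pi> ` A))"
  unfolding rename_profile_def by (simp add: o_def)

lemma sum_list_sum_swap: "(\<Sum>A\<leftarrow>P. \<Sum>i\<in>I. g A i) = (\<Sum>i\<in>I. \<Sum>A\<leftarrow>P. g A i)"
  by (induction P) (auto simp: sum.distrib)

locale neutral_scoring_rule =
  fixes f :: "'a set \<Rightarrow> 'a set list \<Rightarrow> 'a rel set"
    and cost :: "'a set \<Rightarrow> 'a set \<Rightarrow> 'a rel \<Rightarrow> real"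
  assumes axis_rule: "axis_rule f"
    and neutral: "neutral f"
    and f_eq_optimal: "\<And>C P. finite C \<Longrightarrow> is_profile C P \<Longrightarrow>
      f C P = optimal_axes C (\<lambda>r. \<Sum>A\<leftarrow>P. cost C A r)"
begin

lemma f_nonempty: "finite C \<Longrightarrow> is_profile C P \<Longrightarrow> f C P \<noteq> {}"
  using axis_rule unfolding axis_rule_def by blast

lemma f_subset_axes: "finite C \<Longrightarrow> is_profile C P \<Longrightarrow> f C P \<subseteq> axes C"
  using axis_rule unfolding axis_rule_def by blast

lemma converse_in_f_iff: "finite C \<Longrightarrow> is_profile C P \<Longrightarrow> r\<inverse> \<in> f C P \<longleftrightarrow> r \<in> f C P"
  using axis_rule unfolding axis_rule_def by (metis converse_converse)

lemma rename_in_f_iff: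
  assumes "finite C" "is_profile C P" "\<pi> permutes C"
  shows "rename_axis \<pi> r \<in> f C (rename_profile \<pi> P) \<longleftrightarrow> r \<in> f C P"
proof -
  have "f C (rename_profile \<pi> P) = rename_axis \<pi> ` f C P"
    using neutral assms permutes_imp_bij unfolding neutral_def by blast
  then show ?thesis
    using inj_rename_axis[OF permutes_inj[OF assms(3)]] by (simp add: inj_image_mem_iff)
qed

lemma optimal_axes_renamed:
  assumes "finite C" "is_profile C P" "\<pi> permutes C"
  shows "optimal_axes C (\<lambda>r. \<Sum>A\<leftarrow>P. cost C (\<pi> ` A) (rename_axis \<pi> r)) = f C P"
    and "optimal_axes C (\<lambda>r. \<Sum>A\<leftarrow>P. cost C (\<pi> ` A) ((rename_axis \<pi> r)\<inverse>)) = f C P"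
proof -
  let ?S = "\<lambda>r. \<Sum>A\<leftarrow>P. cost C (\<pi> ` A) r"
  have S: "optimal_axes C ?S = f C (rename_profile \<pi> P)"
    using f_eq_optimal[OF assms(1) is_profile_rename[OF assms(2,3)]]
    by (simp add: sum_list_rename_profile)
  have f_P: "f C P \<subseteq> axes C"
    using f_subset_axes[OF assms(1,2)] .
  have "optimal_axes C (?S \<circ> rename_axis \<pi>) = f C P"
    unfolding optimal_axes_comp[OF bij_rename_axis[OF assms(1,3)]] S
    using rename_in_f_iff[OF assms] f_P by auto
  then show "optimal_axes C (\<lambda>r. ?S (rename_axis \<pi> r)) = f C P"
    by (simp add: o_def)
  have bij: "bij_betw (converse \<circ> rename_axis \<pi>) (axes C) (axes C)"
    using bij_rename_axis[OF assms(1,3)] bij_converse_axes[OF assms(1)] by (rule bij_betw_trans)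
  have "optimal_axes C (?S \<circ> (converse \<circ> rename_axis \<pi>)) = f C P"
    unfolding optimal_axes_comp[OF bij] S
    using rename_in_f_iff[OF assms] converse_in_f_iff[OF assms(1) is_profile_rename[OF assms(2,3)]] f_P
    by auto
  then show "optimal_axes C (\<lambda>r. ?S ((rename_axis \<pi> r)\<inverse>)) = f C P"
    by (simp add: o_def)
qed

lemma f_eq_optimal_sym_cost:
  assumes "finite C" "is_profile C P"
  shows "f C P = optimal_axes C (\<lambda>r. \<Sum>A\<leftarrow>P. sym_cost cost C A r)"
proof -
  let ?S = "\<lambda>\<pi> r. \<Sum>A\<leftarrow>P. cost C (\<pi> ` A) r"
  have "(\<Sum>A\<leftarrow>P. sym_cost cost C A r) =
      (\<Sum>\<pi> | \<pi> permutes C. ?S \<pi> (rename_axis \<pi> r) + ?S \<pi> ((rename_axis \<pi> r)\<inverse>))" for r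
    unfolding sym_cost_def sum_list_sum_swap by (simp add: sum_list_addf)
  moreover have "optimal_axes C (\<lambda>r. \<Sum>\<pi> | \<pi> permutes C.
      ?S \<pi> (rename_axis \<pi> r) + ?S \<pi> ((rename_axis \<pi> r)\<inverse>)) = f C P"
  proof (rule optimal_axes_sum)
    show "finite {\<pi>. \<pi> permutes C}" "{\<pi>. \<pi> permutes C} \<noteq> {}"
      using finite_permutations[OF assms(1)] permutes_id by blast+
    show "f C P \<noteq> {}"
      using f_nonempty[OF assms] .
    show "optimal_axes C (\<lambda>r. ?S \<pi> (rename_axis \<pi> r) + ?S \<pi> ((rename_axis \<pi> r)\<inverse>)) = f C P"
      if "\<pi> \<in> {\<pi>. \<pi> permutes C}" for \<pi>
      using that optimal_axes_add[OF optimal_axes_renamed[OF assms] f_nonempty[OF assms]] by simp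
  qed
  ultimately show ?thesis
    by simp
qed

lemma sym_cost_le_if_in_f:
  assumes "finite C" "is_profile C P" "r \<in> f C P" "r' \<in> axes C"
  shows "(\<Sum>A\<leftarrow>P. sym_cost cost C A r) \<le> (\<Sum>A\<leftarrow>P. sym_cost cost C A r')"
proof -
  have "r \<in> optimal_axes C (\<lambda>r. \<Sum>A\<leftarrow>P. sym_cost cost C A r)"
    using assms(3) f_eq_optimal_sym_cost[OF assms(1,2)] by simp
  from optimal_axes_le[OF this assms(4)] show ?thesis
    by simp
qed

lemma sym_cost_less_if_in_f:
  assumes "finite C" "is_profile C P" "r \<in> f C P" "r' \<in> axes C" "r' \<notin> f C P"
  shows "(\<Sum>A\<leftarrow>P. sym_cost cost C A r) < (\<Sum>A\<leftarrow>P. sym_cost cost C A r')"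
proof -
  have "r \<in> optimal_axes C (\<lambda>r. \<Sum>A\<leftarrow>P. sym_cost cost C A r)"
    "r' \<notin> optimal_axes C (\<lambda>r. \<Sum>A\<leftarrow>P. sym_cost cost C A r)"
    using assms(3,5) f_eq_optimal_sym_cost[OF assms(1,2)] by simp_all
  from optimal_axes_less[OF this(1) assms(4) this(2)] show ?thesis
    by simp
qed

end

section \<open>Costs of ballot patterns\<close>

lemma sym_cost_converse: "sym_cost cost C A (r\<inverse>) = sym_cost cost C A r"
  unfolding sym_cost_def rename_axis_converse by (simp add: add.commute)

lemma sym_cost_rename:
  assumes "\<sigma> permutes C"
  shows "sym_cost cost C (\<sigma> ` A) (rename_axis \<sigma> r) = sym_cost cost C A r"
proof -
  let ?g = "\<lambda>\<pi>. cost C (\<pi> ` A) (rename_axis \<pi> r) + cost C (\<pi> ` A) ((rename_axis \<pi> r)\<inverse>)"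
  have "sym_cost cost C (\<sigma> ` A) (rename_axis \<sigma> r) = (\<Sum>\<pi> | \<pi> permutes C. ?g (\<pi> \<circ> \<sigma>))"
    unfolding sym_cost_def rename_axis_comp by (simp add: image_comp)
  also have "\<dots> = (\<Sum>\<pi> | \<pi> permutes C. ?g \<pi>)"
  proof (rule sum.reindex_bij_witness[where i = "\<lambda>\<pi>. \<pi> \<circ> inv \<sigma>" and j = "\<lambda>\<pi>. \<pi> \<circ> \<sigma>"])
    fix \<pi>
    assume "\<pi> \<in> {\<pi>. \<pi> permutes C}"
    then show "\<pi> \<circ> \<sigma> \<circ> inv \<sigma> = \<pi>" "\<pi> \<circ> \<sigma> \<in> {\<pi>. \<pi> permutes C}"
      "\<pi> \<circ> inv \<sigma> \<circ> \<sigma> = \<pi>" "\<pi> \<circ> inv \<sigma> \<in> {\<pi>. \<pi> permutes C}"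
      using permutes_inv_o[OF assms] permutes_compose[OF assms] permutes_compose[OF permutes_inv[OF assms]]
      by (auto simp: o_assoc[symmetric])
  qed simp
  finally show ?thesis
    unfolding sym_cost_def .
qed

lemma sym_cost_same_pattern:
  assumes "distinct xs" "distinct ys" "set xs = C" "set ys = C" "A \<subseteq> C" "B \<subseteq> C"
    and pattern: "map (\<lambda>x. x \<in> A) xs = map (\<lambda>y. y \<in> B) ys"
  shows "sym_cost cost C A (list_axis xs) = sym_cost cost C B (list_axis ys)"
proof -
  define \<sigma> where "\<sigma> = permutation_of_list (zip xs ys)"
  have len: "length xs = length ys"
    using arg_cong[OF pattern, of length] by simp
  have perm: "\<sigma> permutes C"
    unfolding \<sigma>_def using assms(1-4) len by (intro permutation_of_list_permutes list_permutesI) auto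
  have map_\<sigma>: "map \<sigma> xs = ys"
  proof (rule nth_equalityI)
    fix i
    assume "i < length (map \<sigma> xs)"
    then show "map \<sigma> xs ! i = ys ! i"
      using map_of_zip_nth[OF len assms(1)] len by (simp add: \<sigma>_def permutation_of_list_def)
  qed (simp add: len)
  have agree: "\<sigma> x \<in> B \<longleftrightarrow> x \<in> A" if "x \<in> set xs" for x
    using pattern that unfolding map_\<sigma>[symmetric] map_map by (auto simp: map_eq_conv)
  have "\<sigma> ` A = B"
  proof
    show "\<sigma> ` A \<subseteq> B"
      using agree assms(3,5) by blast
    show "B \<subseteq> \<sigma> ` A"
    proof
      fix y
      assume "y \<in> B"
      then have "y \<in> \<sigma> ` set xs"
        using assms(4,6) map_\<sigma> by auto
      then show "y \<in> \<sigma> ` A"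
        using agree \<open>y \<in> B\<close> by blast
    qed
  qed
  then have "sym_cost cost C B (list_axis ys) = sym_cost cost C (\<sigma> ` A) (rename_axis \<sigma> (list_axis xs))"
    by (simp add: rename_axis_list_axis map_\<sigma>)
  then show ?thesis
    using sym_cost_rename[OF perm] by simp
qed

text \<open>
  Ballots are described by their membership pattern \<open>bs\<close> along an enumeration \<open>L\<close> of \<open>C\<close>;
  renaming invariance makes this pattern all that matters for the symmetrized cost.
\<close>

definition shape_cost :: "('a set \<Rightarrow> 'a set \<Rightarrow> 'a rel \<Rightarrow> real) \<Rightarrow> 'a set \<Rightarrow> 'a list \<Rightarrow> bool list \<Rightarrow> real" where
  "shape_cost cost C L bs = sym_cost cost C {L ! i |i. i < length L \<and> bs ! i} (list_axis L)"

lemma map_mem_nth_set: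
  assumes "distinct L" "length bs = length L"
  shows "map (\<lambda>x. x \<in> {L ! i |i. i < length L \<and> bs ! i}) L = bs"
proof (rule nth_equalityI)
  fix j
  assume "j < length (map (\<lambda>x. x \<in> {L ! i |i. i < length L \<and> bs ! i}) L)"
  then show "map (\<lambda>x. x \<in> {L ! i |i. i < length L \<and> bs ! i}) L ! j = bs ! j"
    using assms(1) by (auto simp: nth_eq_iff_index_eq)
qed (use assms(2) in simp)

lemma sym_cost_eq_shape_cost:
  assumes "distinct xs" "distinct L" "set xs = C" "set L = C" "A \<subseteq> C"
  shows "sym_cost cost C A (list_axis xs) = shape_cost cost C L (map (\<lambda>x. x \<in> A) xs)"
proof -
  have "length xs = length L"
    using assms(1-4) by (metis distinct_card)
  then have "map (\<lambda>x. x \<in> {L ! i |i. i < length L \<and> map (\<lambda>x. x \<in> A) xs ! i}) L =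
      map (\<lambda>x. x \<in> A) xs"
    using map_mem_nth_set[OF assms(2)] by simp
  then show ?thesis
    unfolding shape_cost_def using assms
    by (intro sym_cost_same_pattern) auto
qed

lemma shape_cost_rev:
  assumes "distinct L" "set L = C" "length bs = length L"
  shows "shape_cost cost C L (rev bs) = shape_cost cost C L bs"
proof -
  define A where "A = {L ! i |i. i < length L \<and> bs ! i}"
  have A: "A \<subseteq> C" "map (\<lambda>x. x \<in> A) L = bs"
    unfolding A_def using assms map_mem_nth_set by auto
  have "shape_cost cost C L (rev bs) = sym_cost cost C A (list_axis (rev L))"
    using sym_cost_eq_shape_cost[of "rev L" L C A cost] assms A by (simp add: rev_map[symmetric])
  also have "\<dots> = sym_cost cost C A (list_axis L)"
    by (simp add: list_axis_rev sym_cost_converse)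
  also have "\<dots> = shape_cost cost C L bs"
    using sym_cost_eq_shape_cost[of L L C A cost] assms A by simp
  finally show ?thesis .
qed

text \<open>Bounded quantifiers, so that \<open>simp\<close> decides contiguity of explicit lists.\<close>

definition contiguous :: "bool list \<Rightarrow> bool" where
  "contiguous bs \<longleftrightarrow> (\<forall>k<length bs. \<forall>j<k. \<forall>i<j. bs ! i \<longrightarrow> bs ! k \<longrightarrow> bs ! j)"

lemma is_interval_list_axis_iff:
  assumes "distinct xs"
  shows "is_interval (list_axis xs) A \<longleftrightarrow> contiguous (map (\<lambda>x. x \<in> A) xs)"
proof
  assume interval: "is_interval (list_axis xs) A"
  show "contiguous (map (\<lambda>x. x \<in> A) xs)"
    unfolding contiguous_def
  proof (intro allI impI)
    fix i j k
    assume ijk: "k < length (map (\<lambda>x. x \<in> A) xs)" "j < k" "i < j"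
      and ends: "map (\<lambda>x. x \<in> A) xs ! i" "map (\<lambda>x. x \<in> A) xs ! k"
    then have "k < length xs" "j < length xs" "xs ! i \<in> A" "xs ! k \<in> A"
      by simp_all
    moreover have "(xs ! i, xs ! j) \<in> list_axis xs" "(xs ! j, xs ! k) \<in> list_axis xs"
      unfolding list_axis_iff_nth using ijk(2,3) \<open>k < length xs\<close> \<open>j < length xs\<close> by blast+
    ultimately show "map (\<lambda>x. x \<in> A) xs ! j"
      using interval[unfolded is_interval_def, rule_format, of "xs ! i" "xs ! k" "xs ! j"] by simp
  qed
next
  assume contiguous: "contiguous (map (\<lambda>x. x \<in> A) xs)"
  show "is_interval (list_axis xs) A"
    unfolding is_interval_def
  proof (intro ballI allI impI)
    fix a b c
    assume "a \<in> A" "b \<in> A" and between: "(a, c) \<in> list_axis xs \<and> (c, b) \<in> list_axis xs"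
    obtain i j where ij: "i < j" "j < length xs" "xs ! i = a" "xs ! j = c"
      using between by (auto simp: list_axis_iff_nth)
    obtain j' k where jk: "j' < k" "k < length xs" "xs ! j' = c" "xs ! k = b"
      using between by (auto simp: list_axis_iff_nth)
    have "j' = j"
      using nth_eq_iff_index_eq[OF assms, of j' j] ij jk by simp
    then show "c \<in> A"
      using contiguous[unfolded contiguous_def, rule_format, of k j i] ij jk \<open>a \<in> A\<close> \<open>b \<in> A\<close>
      by simp
  qed
qed

lemma mset_bool_list_eq:
  fixes bs bs' :: "bool list"
  assumes "length bs' = length bs" "count_list bs' True = count_list bs True"
  shows "mset bs' = mset bs"
proof -
  have "count_list xs False + count_list xs True = length xs" for xs :: "bool list"
    by (induction xs) auto
  then have "count_list bs' b = count_list bs b" for b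
    using assms by (cases b) (simp, metis add_right_cancel)
  then show ?thesis
    by (simp add: multiset_eq_iff count_mset)
qed

locale clone_rule = neutral_scoring_rule +
  assumes consistent: "consistent_with_linearity f"
    and resistant: "resistant_to_cloning f"
    and proximity: "clone_proximity f"
begin

lemma sym_cost_interval:
  assumes "finite C" "A \<noteq> {}" "A \<subseteq> C" "r \<in> axes C" "r' \<in> axes C" "is_interval r A"
  shows "is_interval r' A \<Longrightarrow> sym_cost cost C A r' = sym_cost cost C A r"
    and "\<not> is_interval r' A \<Longrightarrow> sym_cost cost C A r < sym_cost cost C A r'"
proof -
  have P: "is_profile C [A]"
    using assms(2,3) by (simp add: is_profile_def)
  have r: "r \<in> con C [A]"
    using assms(4,6) by (simp add: con_def)
  then have "f C [A] = con C [A]"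
    using consistent assms(1) P unfolding consistent_with_linearity_def is_linear_def by blast
  moreover have "f C [A] = optimal_axes C (sym_cost cost C A)"
    using f_eq_optimal_sym_cost[OF assms(1) P] by simp
  ultimately have optimal: "optimal_axes C (sym_cost cost C A) = con C [A]"
    by simp
  show "sym_cost cost C A r' = sym_cost cost C A r" if "is_interval r' A"
  proof -
    have "r' \<in> con C [A]"
      using assms(5) that by (simp add: con_def)
    then show ?thesis
      using optimal_axes_le[of _ C "sym_cost cost C A"] optimal r assms(4,5)
      by (metis order_antisym)
  qed
  show "sym_cost cost C A r < sym_cost cost C A r'" if "\<not> is_interval r' A"
  proof -
    have "r' \<notin> con C [A]"
      using that by (simp add: con_def)
    then show ?thesis
      using optimal_axes_less[of r C "sym_cost cost C A" r'] optimal r assms(5) by simp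
  qed
qed

lemma shape_cost_contiguous:
  assumes L: "distinct L" "set L = C"
    and bs: "length bs = length L" "True \<in> set bs" "contiguous bs"
    and bs': "length bs' = length L" "count_list bs' True = count_list bs True"
  shows "contiguous bs' \<Longrightarrow> shape_cost cost C L bs' = shape_cost cost C L bs"
    and "\<not> contiguous bs' \<Longrightarrow> shape_cost cost C L bs < shape_cost cost C L bs'"
proof -
  define A where "A = {L ! i |i. i < length L \<and> bs ! i}"
  have A: "A \<subseteq> C" "map (\<lambda>x. x \<in> A) L = bs"
    unfolding A_def using L bs(1) map_mem_nth_set by auto
  then have "A \<noteq> {}"
    using bs(2) by auto
  have "mset bs' = mset (map (\<lambda>x. x \<in> A) L)"
    using mset_bool_list_eq bs bs' A(2) by simp
  then obtain p where p: "p permutes {..<length L}" "permute_list p (map (\<lambda>x. x \<in> A) L) = bs'"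
    by (metis length_map mset_eq_permutation)
  define ys where "ys = permute_list p L"
  have ys: "distinct ys" "set ys = C" "map (\<lambda>x. x \<in> A) ys = bs'"
    unfolding ys_def using p L mset_eq_imp_distinct_iff[OF mset_permute_list[OF p(1)]]
    by (simp_all add: permute_list_map)
  have fin: "finite C"
    using L(2) by blast
  have axes: "list_axis L \<in> axes C" "list_axis ys \<in> axes C"
    using list_axis_in_axes[OF L(1)] list_axis_in_axes[OF ys(1)] L(2) ys(2) by simp_all
  have cost: "sym_cost cost C A (list_axis L) = shape_cost cost C L bs"
    "sym_cost cost C A (list_axis ys) = shape_cost cost C L bs'"
    using sym_cost_eq_shape_cost[OF L(1) L(1) L(2) L(2) A(1)]
      sym_cost_eq_shape_cost[OF ys(1) L(1) ys(2) L(2) A(1)] A(2) ys(3) by simp_all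
  have interval: "is_interval (list_axis L) A" "is_interval (list_axis ys) A \<longleftrightarrow> contiguous bs'"
    using is_interval_list_axis_iff[OF L(1)] is_interval_list_axis_iff[OF ys(1)] ys(3) A(2) bs(3)
    by simp_all
  show "contiguous bs' \<Longrightarrow> shape_cost cost C L bs' = shape_cost cost C L bs"
    using sym_cost_interval(1)[OF fin \<open>A \<noteq> {}\<close> A(1) axes interval(1)] interval(2) cost by simp
  show "\<not> contiguous bs' \<Longrightarrow> shape_cost cost C L bs < shape_cost cost C L bs'"
    using sym_cost_interval(2)[OF fin \<open>A \<noteq> {}\<close> A(1) axes interval(1)] interval(2) cost by simp
qed

lemma not_in_f_if_clones_split:
  assumes "finite C" "is_profile C P" "clones C P a a'" "A \<in> set P" "a \<in> A" "a' \<in> A" "x \<notin> A"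
    and "(a, x) \<in> r \<and> (x, a') \<in> r \<or> (a', x) \<in> r \<and> (x, a) \<in> r"
  shows "r \<notin> f C P"
  using proximity assms unfolding clone_proximity_def by blast

lemma not_in_f_if_restriction_not_in_f:
  assumes "finite C" "is_profile C P" "clones C P a a'"
    and "restrict_axis a r \<notin> f (C - {a}) (remove_cand a P)"
  shows "r \<notin> f C P"
  using resistant assms unfolding resistant_to_cloning_def by blast

lemma clone_insertion_in_f:
  assumes "finite C" "is_profile C P" "clones C P a a'" "distinct L" "set L = C - {a}"
    and "list_axis L \<in> f (C - {a}) (remove_cand a P)"
  shows "\<exists>i\<le>length L. list_axis (take i L @ a # drop i L) \<in> f C P"
proof -
  obtain r where r: "r \<in> f C P" "restrict_axis a r = list_axis L"
    using resistant assms(1-3,6) unfolding resistant_to_cloning_def by blast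
  moreover have "r \<in> axes C" "a \<in> C"
    using r(1) f_subset_axes[OF assms(1,2)] assms(3) by (auto simp: clones_def)
  ultimately show ?thesis
    using list_axis_insertion[OF assms(1) _ _ assms(4,5)] by metis
qed

end

section \<open>Five candidates\<close>

locale five_candidates = clone_rule f cost for f :: "'a set \<Rightarrow> 'a set list \<Rightarrow> 'a rel set" and cost +
  fixes c0 c1 c2 c3 c4 :: 'a
  assumes distinct_candidates: "distinct [c0, c1, c2, c3, c4]"
begin

lemma candidates_neq [simp]:
  "c0 \<noteq> c1" "c0 \<noteq> c2" "c0 \<noteq> c3" "c0 \<noteq> c4" "c1 \<noteq> c2" "c1 \<noteq> c3" "c1 \<noteq> c4"
  "c2 \<noteq> c3" "c2 \<noteq> c4" "c3 \<noteq> c4"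
  "c1 \<noteq> c0" "c2 \<noteq> c0" "c3 \<noteq> c0" "c4 \<noteq> c0" "c2 \<noteq> c1" "c3 \<noteq> c1" "c4 \<noteq> c1"
  "c3 \<noteq> c2" "c4 \<noteq> c2" "c4 \<noteq> c3"
  using distinct_candidates by auto

abbreviation "C4 \<equiv> {c0, c1, c2, c3}"
abbreviation "C5 \<equiv> {c0, c1, c2, c3, c4}"
abbreviation "h4 \<equiv> shape_cost cost C4 [c0, c1, c2, c3]"
abbreviation "h5 \<equiv> shape_cost cost C5 [c0, c1, c2, c3, c4]"

lemma set_eq_C4: "distinct xs \<Longrightarrow> length xs = 4 \<Longrightarrow> set xs \<subseteq> C4 \<Longrightarrow> set xs = C4"
  using set_eq_if_distinct_length[of xs "[c0, c1, c2, c3]"] by simp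

lemma set_eq_C5: "distinct xs \<Longrightarrow> length xs = 5 \<Longrightarrow> set xs \<subseteq> C5 \<Longrightarrow> set xs = C5"
  using set_eq_if_distinct_length[of xs "[c0, c1, c2, c3, c4]"] by simp

lemma sym_cost4:
  "distinct xs \<Longrightarrow> length xs = 4 \<Longrightarrow> set xs \<subseteq> C4 \<Longrightarrow> A \<subseteq> C4 \<Longrightarrow>
    sym_cost cost C4 A (list_axis xs) = h4 (map (\<lambda>x. x \<in> A) xs)"
  by (rule sym_cost_eq_shape_cost) (simp_all add: set_eq_C4)

lemma sym_cost5:
  "distinct xs \<Longrightarrow> length xs = 5 \<Longrightarrow> set xs \<subseteq> C5 \<Longrightarrow> A \<subseteq> C5 \<Longrightarrow>
    sym_cost cost C5 A (list_axis xs) = h5 (map (\<lambda>x. x \<in> A) xs)"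
  by (rule sym_cost_eq_shape_cost) (simp_all add: set_eq_C5)

lemma list_axis_in_axes4:
  "distinct xs \<Longrightarrow> length xs = 4 \<Longrightarrow> set xs \<subseteq> C4 \<Longrightarrow> list_axis xs \<in> axes C4"
  using list_axis_in_axes set_eq_C4 by metis

lemma list_axis_in_axes5:
  "distinct xs \<Longrightarrow> length xs = 5 \<Longrightarrow> set xs \<subseteq> C5 \<Longrightarrow> list_axis xs \<in> axes C5"
  using list_axis_in_axes set_eq_C5 by metis

lemmas evaluate_costs = sym_cost4 sym_cost5 list_axis_in_axes4 list_axis_in_axes5

lemma h4_values:
  "h4 [False, True, True, False] = h4 [True, True, False, False]"
  "h4 [False, False, True, True] = h4 [True, True, False, False]"
  "h4 [False, True, True, True] = h4 [True, True, True, False]"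
  "h4 [True, True, False, False] < h4 [True, False, True, False]"
  "h4 [True, True, False, False] < h4 [True, False, False, True]"
  "h4 [True, True, True, False] < h4 [True, False, True, True]"
  by (rule shape_cost_contiguous; simp add: contiguous_def All_less_Suc numeral_eq_Suc)+

lemma h4_reversal:
  "h4 [False, True, False, True] = h4 [True, False, True, False]"
  "h4 [True, True, False, True] = h4 [True, False, True, True]"
  using shape_cost_rev[of "[c0, c1, c2, c3]" C4 "[True, False, True, False]" cost]
    shape_cost_rev[of "[c0, c1, c2, c3]" C4 "[True, False, True, True]" cost]
  by simp_all

lemma h5_values:
  "h5 [False, True, True, False, False] = h5 [True, True, False, False, False]"
  "h5 [False, False, True, True, False] = h5 [True, True, False, False, False]"
  "h5 [False, False, False, True, True] = h5 [True, True, False, False, False]"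
  "h5 [False, True, True, True, False] = h5 [True, True, True, False, False]"
  "h5 [False, False, True, True, True] = h5 [True, True, True, False, False]"
  "h5 [False, True, True, True, True] = h5 [True, True, True, True, False]"
  "h5 [True, True, False, False, False] < h5 [True, False, True, False, False]"
  "h5 [True, True, False, False, False] < h5 [False, True, False, True, False]"
  "h5 [True, True, False, False, False] < h5 [True, False, False, True, False]"
  "h5 [True, True, False, False, False] < h5 [True, False, False, False, True]"
  "h5 [True, True, True, False, False] < h5 [True, False, True, False, True]"
  "h5 [True, True, True, False, False] < h5 [True, True, False, False, True]"
  "h5 [True, True, True, False, False] < h5 [True, True, False, True, False]"
  "h5 [True, True, True, False, False] < h5 [True, False, True, True, False]"
  "h5 [True, True, True, True, False] < h5 [True, True, False, True, True]"
  "h5 [True, True, True, True, False] < h5 [True, True, True, False, True]"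
  by (rule shape_cost_contiguous; simp add: contiguous_def All_less_Suc numeral_eq_Suc)+

lemma h5_reversal:
  "h5 [False, False, True, False, True] = h5 [True, False, True, False, False]"
  "h5 [False, True, False, False, True] = h5 [True, False, False, True, False]"
  "h5 [True, False, False, True, True] = h5 [True, True, False, False, True]"
  "h5 [False, True, False, True, True] = h5 [True, True, False, True, False]"
  "h5 [False, True, True, False, True] = h5 [True, False, True, True, False]"
  "h5 [True, False, True, True, True] = h5 [True, True, True, False, True]"
  using shape_cost_rev[of "[c0, c1, c2, c3, c4]" C5 "[True, False, True, False, False]" cost]
    shape_cost_rev[of "[c0, c1, c2, c3, c4]" C5 "[True, False, False, True, False]" cost]
    shape_cost_rev[of "[c0, c1, c2, c3, c4]" C5 "[True, True, False, False, True]" cost]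
    shape_cost_rev[of "[c0, c1, c2, c3, c4]" C5 "[True, True, False, True, False]" cost]
    shape_cost_rev[of "[c0, c1, c2, c3, c4]" C5 "[True, False, True, True, False]" cost]
    shape_cost_rev[of "[c0, c1, c2, c3, c4]" C5 "[True, True, True, False, True]" cost]
  by simp_all

text \<open>The explicit enumeration of all axes on \<open>C4\<close> lets \<open>simp\<close> check optimality.\<close>

lemma in_f4_if_minimal:
  assumes "is_profile C4 P" "distinct L" "length L = 4" "set L \<subseteq> C4"
    and "\<forall>xs\<in>set (permutations_of_list_impl [c0, c1, c2, c3]).
      (\<Sum>A\<leftarrow>P. sym_cost cost C4 A (list_axis L)) \<le> (\<Sum>A\<leftarrow>P. sym_cost cost C4 A (list_axis xs))"
  shows "list_axis L \<in> f C4 P"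
proof -
  have "list_axis L \<in> optimal_axes C4 (\<lambda>r. \<Sum>A\<leftarrow>P. sym_cost cost C4 A r)"
  proof (rule optimal_axesI)
    show "list_axis L \<in> axes C4"
      using assms(2-4) by (rule list_axis_in_axes4)
    fix r
    assume "r \<in> axes C4"
    then obtain xs where xs: "distinct xs" "set xs = C4" "r = list_axis xs"
      using obtain_list_axis[of C4 r] by auto
    then have "mset xs = mset [c0, c1, c2, c3]"
      using set_eq_iff_mset_eq_distinct[of xs "[c0, c1, c2, c3]"] by simp
    then have "xs \<in> set (permutations_of_list_impl [c0, c1, c2, c3])"
      by (simp add: set_permutations_of_list_impl permutations_of_multiset_def)
    then show "(\<Sum>A\<leftarrow>P. sym_cost cost C4 A (list_axis L)) \<le> (\<Sum>A\<leftarrow>P. sym_cost cost C4 A r)"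
      using assms(5) xs(3) by simp
  qed
  then show ?thesis
    using f_eq_optimal_sym_cost[OF _ assms(1)] by simp
qed

lemma clone_insertion_in_f5:
  assumes "is_profile C5 Q" "clones C5 Q c4 c0" "remove_cand c4 Q = B"
    and "list_axis L \<in> f C4 B" "distinct L" "length L = 4" "set L \<subseteq> C4"
  shows "\<exists>i\<in>{0, 1, 2, 3, 4}. list_axis (take i L @ c4 # drop i L) \<in> f C5 Q"
proof -
  have "C5 - {c4} = C4"
    by auto
  then have "\<exists>i\<le>length L. list_axis (take i L @ c4 # drop i L) \<in> f C5 Q"
    using assms set_eq_C4 by (intro clone_insertion_in_f) auto
  moreover have "i \<le> 4 \<longleftrightarrow> i \<in> {0, 1, 2, 3, 4}" for i :: nat
    by auto
  ultimately show ?thesis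
    using assms(6) by auto
qed

lemma restriction_not_in_f4:
  assumes "is_profile C5 Q" "clones C5 Q c4 c0" "remove_cand c4 Q = B"
    and "list_axis (removeAll c4 xs) \<notin> f C4 B"
  shows "list_axis xs \<notin> f C5 Q"
proof (rule not_in_f_if_restriction_not_in_f[OF _ assms(1,2)])
  have "C5 - {c4} = C4"
    by auto
  then show "restrict_axis c4 (list_axis xs) \<notin> f (C5 - {c4}) (remove_cand c4 Q)"
    using assms(3,4) by (simp add: restrict_axis_list_axis)
qed simp

text \<open>Explicit axes stay folded; only clone proximity needs their pairs.\<close>

declare list_axis.simps [simp del]

lemmas profile_simps = is_profile_def clones_def remove_cand_def insert_Diff_if

text \<open>
  Excess costs of the non-contiguous patterns on four candidates over the contiguous pattern of the
  same size. The least of them determines optimal axes of some four-candidate profiles; lifting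
  these to the profile in which \<open>c4\<close> clones \<open>c0\<close> yields contradictory inequalities between
  shape costs on five candidates.
\<close>

abbreviation "gap_excess \<equiv> h4 [True, False, True, False] - h4 [True, True, False, False]"
abbreviation "ends_excess \<equiv> h4 [True, False, False, True] - h4 [True, True, False, False]"
abbreviation "split_excess \<equiv> h4 [True, False, True, True] - h4 [True, True, True, False]"

lemma split_excess_least_hole_at_end_cheaper:
  assumes "split_excess \<le> gap_excess" "split_excess \<le> ends_excess"
  shows "h5 [True, True, True, False, True] < h5 [True, True, False, True, True]"
proof -
  define Q where "Q = [{c1, c2}, {c1, c3}, {c0, c2, c3, c4}]"
  have Q: "is_profile C5 Q" "clones C5 Q c4 c0" "remove_cand c4 Q = [{c1, c2}, {c1, c3}, {c0, c2, c3}]"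
    by (simp_all add: Q_def profile_simps)
  have "list_axis [c0, c2, c1, c3] \<in> f C4 [{c1, c2}, {c1, c3}, {c0, c2, c3}]"
    by (rule in_f4_if_minimal)
      (use assms h4_values h4_reversal in \<open>simp_all add: is_profile_def permutations_of_list_impl_nonempty
        evaluate_costs, (intro conjI; linarith)?\<close>)
  then have "\<exists>i\<in>{0, 1, 2, 3, 4}. list_axis (take i [c0, c2, c1, c3] @ c4 # drop i [c0, c2, c1, c3]) \<in> f C5 Q"
    using Q by (intro clone_insertion_in_f5) simp_all
  moreover have "list_axis [c0, c2, c1, c4, c3] \<notin> f C5 Q" "list_axis [c0, c2, c1, c3, c4] \<notin> f C5 Q"
    by (rule not_in_f_if_clones_split[of _ _ c4 c0 "{c0, c2, c3, c4}" c1];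
        simp add: Q_def profile_simps list_axis.simps)+
  ultimately obtain e where e: "e \<in> f C5 Q" "e = list_axis [c4, c0, c2, c1, c3] \<or>
      e = list_axis [c0, c4, c2, c1, c3] \<or> e = list_axis [c0, c2, c4, c1, c3]"
    by auto
  have "(\<Sum>A\<leftarrow>Q. sym_cost cost C5 A e) < (\<Sum>A\<leftarrow>Q. sym_cost cost C5 A (list_axis [c0, c2, c1, c3, c4]))"
    using Q e \<open>list_axis [c0, c2, c1, c3, c4] \<notin> f C5 Q\<close>
    by (intro sym_cost_less_if_in_f) (simp_all add: evaluate_costs)
  then show ?thesis
    using e h5_values h5_reversal by (auto simp: Q_def evaluate_costs)
qed

lemma split_excess_least_hole_inside_not_dearer:
  assumes "split_excess \<le> gap_excess" "split_excess \<le> ends_excess"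
  shows "h5 [True, True, False, True, True] \<le> h5 [True, True, True, False, True]"
proof -
  define Q where "Q = [{c0, c1, c4}, {c1, c2}, {c0, c2, c3, c4}]"
  have Q: "is_profile C5 Q" "clones C5 Q c4 c0" "remove_cand c4 Q = [{c0, c1}, {c1, c2}, {c0, c2, c3}]"
    by (simp_all add: Q_def profile_simps)
  have "list_axis [c0, c1, c2, c3] \<in> f C4 [{c0, c1}, {c1, c2}, {c0, c2, c3}]"
    by (rule in_f4_if_minimal)
      (use assms h4_values h4_reversal in \<open>simp_all add: is_profile_def permutations_of_list_impl_nonempty
        evaluate_costs, (intro conjI; linarith)?\<close>)
  then have "\<exists>i\<in>{0, 1, 2, 3, 4}. list_axis (take i [c0, c1, c2, c3] @ c4 # drop i [c0, c1, c2, c3]) \<in> f C5 Q"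
    using Q by (intro clone_insertion_in_f5) simp_all
  moreover have "list_axis [c0, c1, c4, c2, c3] \<notin> f C5 Q" "list_axis [c0, c1, c2, c4, c3] \<notin> f C5 Q"
    "list_axis [c0, c1, c2, c3, c4] \<notin> f C5 Q"
    by (rule not_in_f_if_clones_split[of _ _ c4 c0 "{c0, c2, c3, c4}" c1];
        simp add: Q_def profile_simps list_axis.simps)+
  ultimately obtain e where e: "e \<in> f C5 Q"
    "e = list_axis [c4, c0, c1, c2, c3] \<or> e = list_axis [c0, c4, c1, c2, c3]"
    by auto
  have "(\<Sum>A\<leftarrow>Q. sym_cost cost C5 A e) \<le> (\<Sum>A\<leftarrow>Q. sym_cost cost C5 A (list_axis [c2, c1, c0, c4, c3]))"
    using Q e by (intro sym_cost_le_if_in_f) (simp_all add: evaluate_costs)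
  then show ?thesis
    using e h5_values h5_reversal by (auto simp: Q_def evaluate_costs)
qed

lemma ends_excess_least_optimal4:
  assumes "ends_excess < split_excess" "ends_excess \<le> gap_excess"
  shows "list_axis [c0, c1, c3, c2] \<in> f C4 [{c0, c1}, {c0, c2}, {c1, c2, c3}]"
    and "list_axis [c1, c0, c2, c3] \<notin> f C4 [{c0, c1}, {c0, c2}, {c1, c2, c3}]"
proof -
  show "list_axis [c0, c1, c3, c2] \<in> f C4 [{c0, c1}, {c0, c2}, {c1, c2, c3}]"
    by (rule in_f4_if_minimal)
      (use assms h4_values h4_reversal in \<open>simp_all add: is_profile_def permutations_of_list_impl_nonempty
        evaluate_costs, (intro conjI; linarith)?\<close>)
  show "list_axis [c1, c0, c2, c3] \<notin> f C4 [{c0, c1}, {c0, c2}, {c1, c2, c3}]"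
  proof
    assume "list_axis [c1, c0, c2, c3] \<in> f C4 [{c0, c1}, {c0, c2}, {c1, c2, c3}]"
    then have "(\<Sum>A\<leftarrow>[{c0, c1}, {c0, c2}, {c1, c2, c3}]. sym_cost cost C4 A (list_axis [c1, c0, c2, c3]))
        \<le> (\<Sum>A\<leftarrow>[{c0, c1}, {c0, c2}, {c1, c2, c3}]. sym_cost cost C4 A (list_axis [c0, c1, c3, c2]))"
      by (intro sym_cost_le_if_in_f) (simp_all add: is_profile_def evaluate_costs)
    then show False
      by (simp add: evaluate_costs) (use assms h4_values h4_reversal in linarith)
  qed
qed

lemma ends_excess_not_least:
  assumes "ends_excess < split_excess" "ends_excess \<le> gap_excess"
  shows False
proof -
  define Q where "Q = [{c0, c1, c4}, {c0, c2, c4}, {c1, c2, c3}]"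
  have Q: "is_profile C5 Q" "clones C5 Q c4 c0" "remove_cand c4 Q = [{c0, c1}, {c0, c2}, {c1, c2, c3}]"
    by (simp_all add: Q_def profile_simps)
  have "\<exists>i\<in>{0, 1, 2, 3, 4}. list_axis (take i [c0, c1, c3, c2] @ c4 # drop i [c0, c1, c3, c2]) \<in> f C5 Q"
    using Q ends_excess_least_optimal4(1)[OF assms] by (intro clone_insertion_in_f5) simp_all
  moreover have "list_axis [c0, c1, c4, c3, c2] \<notin> f C5 Q" "list_axis [c0, c1, c3, c4, c2] \<notin> f C5 Q"
    "list_axis [c0, c1, c3, c2, c4] \<notin> f C5 Q"
    by (rule not_in_f_if_clones_split[of _ _ c4 c0 "{c0, c2, c4}" c1];
        simp add: Q_def profile_simps list_axis.simps)+
  ultimately obtain e where e: "e \<in> f C5 Q"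
    "e = list_axis [c4, c0, c1, c3, c2] \<or> e = list_axis [c0, c4, c1, c3, c2]"
    by auto
  have "list_axis [c1, c0, c4, c2, c3] \<notin> f C5 Q"
    using Q ends_excess_least_optimal4(2)[OF assms] by (intro restriction_not_in_f4) simp_all
  then have "(\<Sum>A\<leftarrow>Q. sym_cost cost C5 A e) < (\<Sum>A\<leftarrow>Q. sym_cost cost C5 A (list_axis [c1, c0, c4, c2, c3]))"
    using Q e by (intro sym_cost_less_if_in_f) (simp_all add: evaluate_costs)
  then show False
    using e h5_values h5_reversal by (auto simp: Q_def evaluate_costs)
qed

lemma gap_excess_least_far_pair_not_dearer:
  assumes "gap_excess < ends_excess" "gap_excess < split_excess"
  shows "h5 [True, False, False, True, False] \<le> h5 [True, False, True, False, False]"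
proof -
  define Q where "Q = [{c0, c1, c4}, {c1, c2}, {c1, c3}]"
  have Q: "is_profile C5 Q" "clones C5 Q c4 c0" "remove_cand c4 Q = [{c0, c1}, {c1, c2}, {c1, c3}]"
    by (simp_all add: Q_def profile_simps)
  have "list_axis [c2, c1, c0, c3] \<in> f C4 [{c0, c1}, {c1, c2}, {c1, c3}]"
    by (rule in_f4_if_minimal)
      (use assms h4_values h4_reversal in \<open>simp_all add: is_profile_def permutations_of_list_impl_nonempty
        evaluate_costs, (intro conjI; linarith)?\<close>)
  then have "\<exists>i\<in>{0, 1, 2, 3, 4}. list_axis (take i [c2, c1, c0, c3] @ c4 # drop i [c2, c1, c0, c3]) \<in> f C5 Q"
    using Q by (intro clone_insertion_in_f5) simp_all
  moreover have "list_axis [c4, c2, c1, c0, c3] \<notin> f C5 Q"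
    by (rule not_in_f_if_clones_split[of _ _ c4 c0 "{c0, c1, c4}" c2])
      (simp_all add: Q_def profile_simps list_axis.simps)
  moreover have "list_axis [c2, c1, c0, c3, c4] \<notin> f C5 Q"
    by (rule not_in_f_if_clones_split[of _ _ c4 c0 "{c0, c1, c4}" c3])
      (simp_all add: Q_def profile_simps list_axis.simps)
  ultimately obtain e where e: "e \<in> f C5 Q" "e = list_axis [c2, c4, c1, c0, c3] \<or>
      e = list_axis [c2, c1, c4, c0, c3] \<or> e = list_axis [c2, c1, c0, c4, c3]"
    by auto
  have "(\<Sum>A\<leftarrow>Q. sym_cost cost C5 A e) \<le> (\<Sum>A\<leftarrow>Q. sym_cost cost C5 A (list_axis [c4, c0, c1, c2, c3]))"
    using Q e by (intro sym_cost_le_if_in_f) (simp_all add: evaluate_costs)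
  then show ?thesis
    using e h5_values h5_reversal by (auto simp: Q_def evaluate_costs)
qed

lemma gap_excess_least_optimal4:
  assumes "gap_excess < ends_excess" "gap_excess < split_excess"
  shows "list_axis [c0, c2, c3, c1] \<in> f C4 [{c1, c2}, {c1, c3}, {c0, c2, c3}]"
    and "list_axis [c1, c2, c0, c3] \<notin> f C4 [{c1, c2}, {c1, c3}, {c0, c2, c3}]"
proof -
  show "list_axis [c0, c2, c3, c1] \<in> f C4 [{c1, c2}, {c1, c3}, {c0, c2, c3}]"
    by (rule in_f4_if_minimal)
      (use assms h4_values h4_reversal in \<open>simp_all add: is_profile_def permutations_of_list_impl_nonempty
        evaluate_costs, (intro conjI; linarith)?\<close>)
  show "list_axis [c1, c2, c0, c3] \<notin> f C4 [{c1, c2}, {c1, c3}, {c0, c2, c3}]"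
  proof
    assume "list_axis [c1, c2, c0, c3] \<in> f C4 [{c1, c2}, {c1, c3}, {c0, c2, c3}]"
    then have "(\<Sum>A\<leftarrow>[{c1, c2}, {c1, c3}, {c0, c2, c3}]. sym_cost cost C4 A (list_axis [c1, c2, c0, c3]))
        \<le> (\<Sum>A\<leftarrow>[{c1, c2}, {c1, c3}, {c0, c2, c3}]. sym_cost cost C4 A (list_axis [c0, c2, c3, c1]))"
      by (intro sym_cost_le_if_in_f) (simp_all add: is_profile_def evaluate_costs)
    then show False
      by (simp add: evaluate_costs) (use assms h4_values h4_reversal in linarith)
  qed
qed

lemma gap_excess_least_near_pair_cheaper:
  assumes "gap_excess < ends_excess" "gap_excess < split_excess"
  shows "h5 [True, False, True, False, False] < h5 [True, False, False, True, False]"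
proof -
  define Q where "Q = [{c1, c2}, {c1, c3}, {c0, c2, c3, c4}]"
  have Q: "is_profile C5 Q" "clones C5 Q c4 c0" "remove_cand c4 Q = [{c1, c2}, {c1, c3}, {c0, c2, c3}]"
    by (simp_all add: Q_def profile_simps)
  have "\<exists>i\<in>{0, 1, 2, 3, 4}. list_axis (take i [c0, c2, c3, c1] @ c4 # drop i [c0, c2, c3, c1]) \<in> f C5 Q"
    using Q gap_excess_least_optimal4(1)[OF assms] by (intro clone_insertion_in_f5) simp_all
  moreover have "list_axis [c0, c2, c3, c1, c4] \<notin> f C5 Q"
    by (rule not_in_f_if_clones_split[of _ _ c4 c0 "{c0, c2, c3, c4}" c1])
      (simp_all add: Q_def profile_simps list_axis.simps)
  ultimately obtain e where e: "e \<in> f C5 Q" "e = list_axis [c4, c0, c2, c3, c1] \<or>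
      e = list_axis [c0, c4, c2, c3, c1] \<or> e = list_axis [c0, c2, c4, c3, c1] \<or>
      e = list_axis [c0, c2, c3, c4, c1]"
    by auto
  have "list_axis [c1, c2, c0, c3, c4] \<notin> f C5 Q"
    using Q gap_excess_least_optimal4(2)[OF assms] by (intro restriction_not_in_f4) simp_all
  then have "(\<Sum>A\<leftarrow>Q. sym_cost cost C5 A e) < (\<Sum>A\<leftarrow>Q. sym_cost cost C5 A (list_axis [c1, c2, c0, c3, c4]))"
    using Q e by (intro sym_cost_less_if_in_f) (simp_all add: evaluate_costs)
  then show ?thesis
    using e h5_values h5_reversal by (auto simp: Q_def evaluate_costs)
qed

lemma inconsistent: False
proof -
  consider "split_excess \<le> gap_excess" "split_excess \<le> ends_excess"
    | "ends_excess < split_excess" "ends_excess \<le> gap_excess"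
    | "gap_excess < ends_excess" "gap_excess < split_excess"
    by linarith
  then show False
  proof cases
    case 1
    show False
      using split_excess_least_hole_at_end_cheaper[OF 1] split_excess_least_hole_inside_not_dearer[OF 1]
      by linarith
  next
    case 2
    then show False
      by (rule ends_excess_not_least)
  next
    case 3
    show False
      using gap_excess_least_far_pair_not_dearer[OF 3] gap_excess_least_near_pair_cheaper[OF 3]
      by linarith
  qed
qed

end

lemma obtain_five_distinct:
  assumes "infinite (UNIV :: 'a set)"
  obtains c0 c1 c2 c3 c4 :: 'a where "distinct [c0, c1, c2, c3, c4]"
proof -
  obtain B :: "'a set" where "finite B" "card B = 5"
    using infinite_arbitrarily_large[OF assms] by blast
  moreover obtain xs where "set xs = B" "distinct xs"
    using finite_distinct_list[OF \<open>finite B\<close>] by blast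
  ultimately have "length xs = 5"
    using distinct_card by metis
  then obtain c0 c1 c2 c3 c4 where "xs = [c0, c1, c2, c3, c4]"
    by (auto simp: numeral_eq_Suc length_Suc_conv)
  then show thesis
    using that \<open>distinct xs\<close> by blast
qed

theorem mainTheorem11:
  assumes "infinite (UNIV :: 'a set)"
  shows "\<not> (\<exists>f :: 'a set \<Rightarrow> 'a set list \<Rightarrow> 'a rel set.
             axis_rule f \<and> scoring_rule f \<and> neutral f \<and> consistent_with_linearity f \<and>
             resistant_to_cloning f \<and> clone_proximity f)"
proof
  assume "\<exists>f :: 'a set \<Rightarrow> 'a set list \<Rightarrow> 'a rel set.
             axis_rule f \<and> scoring_rule f \<and> neutral f \<and> consistent_with_linearity f \<and>
             resistant_to_cloning f \<and> clone_proximity f"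
  then obtain f :: "'a set \<Rightarrow> 'a set list \<Rightarrow> 'a rel set" where
    f: "axis_rule f" "scoring_rule f" "neutral f" "consistent_with_linearity f"
       "resistant_to_cloning f" "clone_proximity f"
    by blast
  have "\<exists>cost :: 'a set \<Rightarrow> 'a set \<Rightarrow> 'a rel \<Rightarrow> real. \<forall>C P. finite C \<and> is_profile C P \<longrightarrow>
      f C P = optimal_axes C (\<lambda>r. \<Sum>A\<leftarrow>P. cost C A r)"
    using f(2) unfolding scoring_rule_def optimal_axes_def by (elim exE conjE) (rule exI)
  then obtain cost :: "'a set \<Rightarrow> 'a set \<Rightarrow> 'a rel \<Rightarrow> real" where
    cost: "\<And>C P. finite C \<Longrightarrow> is_profile C P \<Longrightarrow> f C P = optimal_axes C (\<lambda>r. \<Sum>A\<leftarrow>P. cost C A r)"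
    by blast
  obtain c0 c1 c2 c3 c4 :: 'a where "distinct [c0, c1, c2, c3, c4]"
    using obtain_five_distinct[OF assms] .
  then interpret five_candidates f cost c0 c1 c2 c3 c4
    using f cost by unfold_locales simp_all
  show False
    by (rule inconsistent)
qed

end
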